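(* Let $T=(p,q:F\to E)$ be an LR textile system with $p$ surjective and $F$ source-free, and let $\Lambda=\Lambda_T$. Suppose that for each $z\in E^0$ we have a partition $\{\mathcal E^1_z,\dots,\mathcal E^{m(z)}_z\}$ of $zE^1$ into nonempty sets such that for each $u\in F^0$ there are $z\in E^0$ and $j$ with $q(uF^1)\subseteq\mathcal E^j_z$. For $v\in F^0$, $1\le i\le m(p(v))$, set $\mathcal F^i_v=vF^1\cap p^{-1}(\mathcal E^i_{p(v)})$, and for $z\in E^0$, $1\le i\le m(z)$, set $\mathcal G^i_z=\mathcal E^i_z\sqcup r_F(q^{-1}(\mathcal E^i_z))$. Let $\widetilde F$ be the directed-graph insplit of $F$ with respect to $\{\mathcal F^i_v\}$ and $\widetilde E$ that of $E$ with respect to $\{\mathcal E^i_z\}$, and define $\tilde p(v^i)=p(v)^i$, $\tilde p(\lambda^i)=p(\lambda)^i$, $\tilde q(v^i)=q(v)^j$, $\tilde q(\lambda^i)=q(\lambda)^j$ for $\lambda\in F^1$, $v\in F^0$, where (for $\lambda$) $v=s(\lambda)$ and $j$ is the index with $q(vF^1)\subseteq\mathcal E^j_{q(v)}$. Then (1) $\{\mathcal F^i_v\}$ is a partition of $F^1$ into nonempty sets, $\tilde p,\tilde q:\widetilde F\to\widetilde E$ are well-defined graph homomorphisms and $\widetilde T=(\tilde p,\tilde q:\widetilde F\to\widetilde E)$ is an LR textile system; (2) $\{\mathcal G^i_z\}$ is a partition of $\Lambda^1=E^1\sqcup F^0$ satisfying the pairing condition; (3) the 2-graph $\Lambda_{\widetilde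 T}$ coincides with the 2-graph $\Lambda_I$ obtained by 2-graph insplitting $\Lambda$ with respect to $\{\mathcal G^i_z\}$.
   Context: Directed graph $E=(E^0,E^1,r,s)$, $zE^1=r^{-1}(z)$; $F$ source-free: $r$ onto $F^0$. Textile system $T=(p,q:F\to E)$: graph homomorphisms $p,q$ (commuting with $r,s$) with $f\mapsto(r(f),p(f),s(f),q(f))$ injective on $F^1$. LR: $p$ has unique $r$-path lifting (for $v\in F^0,e\in E^1$ with $p(v)=r(e)$, exactly one $f\in F^1$ with $r(f)=v,p(f)=e$) and $q$ has unique $s$-path lifting (same with $s$). Directed-graph insplitting: with partitions of $vF^1$ into nonempty $\mathcal F^1_v,\dots,\mathcal F^{m(v)}_v$, the insplit graph has vertices $v^i$, edges $f^j$ ($1\le j\le m(s(f))$), $s(f^j)=s(f)^j$, $r(f^j)=r(f)^k$ if $f\in\mathcal F^k_{r(f)}$. 2-graph: category $\Lambda$ with degree functor $d:\Lambda\to\mathbb N^2$ having unique factorization; $\Lambda^m=d^{-1}(m)$; $\lambda(m,n)$ is the factor of degree $n-m$ at position $[m,n]$; determined by its 1-skeleton and commuting squares. $\Lambda_T$: vertices $E^0$, color-1 edges $E^1$, color-2 edges $F^0$ with $r(w)=q(w)$, $s(w)=p(w)$; commuting squares $ve\sim e'w$ iff some $f\in F^1$ has $r(f)=v,s(f)=w,p(f)=e,q(f)=e'$. The pairing condition for a partition $\{\mathcal G^j_z\}$ of $\Lambda^1$ (with $\{\mathcal G^j_z\}_j$ a partition of the edges with range $z$): for every $\lambda\in\Lambda^{\varepsilon_1+\varepsilon_2}$,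 $\lambda(0,\varepsilon_1)$ and $\lambda(0,\varepsilon_2)$ are in the same set. Insplit 2-graph $\Lambda_I$: vertices $z^i$; edges $f^i$ ($1\le i\le m(s(f))$), same degree, $s(f^i)=s(f)^i$, $r(f^i)=r(f)^j$ where $f\in\mathcal G^j_{r(f)}$; commuting squares $f^ig^k\sim_I a^jb^k$ iff $g\in\mathcal G^i_{s(f)}$, $b\in\mathcal G^j_{s(a)}$, $fg\sim ab$ in $\Lambda$. "Coincides" means: same vertices $z^i$, same edges $e^i$ and $v^i$ with same degree, range, source and same commuting squares. *)

theory Defs
  imports "Graph_Theory.Digraph"
begin

text \<open>Convention: a directed graph E = (E0,E1,r,s) is a Graph_Theory pre_digraph with
  r = head and s = tail; so zE1 = in_arcs E z.\<close>

definition graph_hom ::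
  "('v,'e) pre_digraph \<Rightarrow> ('w,'d) pre_digraph \<Rightarrow> ('v \<Rightarrow> 'w) \<Rightarrow> ('e \<Rightarrow> 'd) \<Rightarrow> bool" where
  "graph_hom G H phv phe \<longleftrightarrow>
     (\<forall>v\<in>verts G. phv v \<in> verts H) \<and>
     (\<forall>e\<in>arcs G. phe e \<in> arcs H \<and> head H (phe e) = phv (head G e)
                              \<and> tail H (phe e) = phv (tail G e))"

definition textile_system ::
  "('v,'e) pre_digraph \<Rightarrow> ('w,'d) pre_digraph \<Rightarrow> ('v \<Rightarrow> 'w) \<Rightarrow> ('e \<Rightarrow> 'd)
     \<Rightarrow> ('v \<Rightarrow> 'w) \<Rightarrow> ('e \<Rightarrow> 'd) \<Rightarrow> bool" where
  "textile_system F E pv pe qv qe \<longleftrightarrow>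
     graph_hom F E pv pe \<and> graph_hom F E qv qe \<and>
     inj_on (\<lambda>f. (head F f, pe f, tail F f, qe f)) (arcs F)"

definition LR_textile ::
  "('v,'e) pre_digraph \<Rightarrow> ('w,'d) pre_digraph \<Rightarrow> ('v \<Rightarrow> 'w) \<Rightarrow> ('e \<Rightarrow> 'd)
     \<Rightarrow> ('v \<Rightarrow> 'w) \<Rightarrow> ('e \<Rightarrow> 'd) \<Rightarrow> bool" where
  "LR_textile F E pv pe qv qe \<longleftrightarrow>
     textile_system F E pv pe qv qe \<and>
     (\<forall>v\<in>verts F. \<forall>e\<in>arcs E. pv v = head E e \<longrightarrow>
         (\<exists>!f. f \<in> arcs F \<and> head F f = v \<and> pe f = e)) \<and>
     (\<forall>v\<in>verts F. \<forall>e\<in>arcs E. qv v = tail E e \<longrightarrow>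
         (\<exists>!f. f \<in> arcs F \<and> tail F f = v \<and> qe f = e))"

definition source_free :: "('v,'e) pre_digraph \<Rightarrow> bool" where
  "source_free F \<longleftrightarrow> head F ` arcs F = verts F"

definition indexed_partition :: "'a set \<Rightarrow> nat \<Rightarrow> (nat \<Rightarrow> 'a set) \<Rightarrow> bool" where
  "indexed_partition A m P \<longleftrightarrow>
     (\<forall>i\<in>{1..m}. P i \<noteq> {}) \<and>
     (\<forall>i\<in>{1..m}. \<forall>j\<in>{1..m}. i \<noteq> j \<longrightarrow> P i \<inter> P j = {}) \<and>
     (\<Union>i\<in>{1..m}. P i) = A"

definition part_index :: "('v \<Rightarrow> nat) \<Rightarrow> ('v \<Rightarrow> nat \<Rightarrow> 'a set) \<Rightarrow> 'v \<Rightarrow> 'a \<Rightarrow> nat" where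
  "part_index m P z x = (THE k. k \<in> {1..m z} \<and> x \<in> P z k)"

text \<open>Directed-graph insplitting; the vertex v^i is (v,i), the edge f^j is (f,j).\<close>
definition insplit ::
  "('v,'e) pre_digraph \<Rightarrow> ('v \<Rightarrow> nat) \<Rightarrow> ('v \<Rightarrow> nat \<Rightarrow> 'e set) \<Rightarrow> ('v \<times> nat, 'e \<times> nat) pre_digraph" where
  "insplit G m P = \<lparr> verts = {(v,i). v \<in> verts G \<and> i \<in> {1..m v}},
                     arcs = {(f,j). f \<in> arcs G \<and> j \<in> {1..m (tail G f)}},
                     tail = (\<lambda>(f,j). (tail G f, j)),
                     head = (\<lambda>(f,j). (head G f, part_index m P (head G f) f)) \<rparr>"

text \<open>A 2-graph presented by its 1-skeleton (vertices, edges with degree, range, source)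
  and its commuting squares.  A square (a,b,c,d) means a b \<sim> c d, where a, d have degree
  e2 and b, c have degree e1; the element lambda of degree e1+e2 it represents has
  lambda(0,e1) = c and lambda(0,e2) = a.\<close>
record ('a,'b) two_graph =
  tverts :: "'a set"
  tedges :: "'b set"
  tdeg :: "'b \<Rightarrow> nat \<times> nat"
  trng :: "'b \<Rightarrow> 'a"
  tsrc :: "'b \<Rightarrow> 'a"
  tsq :: "('b \<times> 'b \<times> 'b \<times> 'b) set"

text \<open>The 2-graph Lambda_T: color-1 edges Inl e (e in E1), color-2 edges Inr w (w in F0).\<close>
definition Lambda_T ::
  "('v,'e) pre_digraph \<Rightarrow> ('w,'d) pre_digraph \<Rightarrow> ('v \<Rightarrow> 'w) \<Rightarrow> ('e \<Rightarrow> 'd)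
     \<Rightarrow> ('v \<Rightarrow> 'w) \<Rightarrow> ('e \<Rightarrow> 'd) \<Rightarrow> ('w, 'd + 'v) two_graph" where
  "Lambda_T F E pv pe qv qe = \<lparr>
     tverts = verts E,
     tedges = Inl ` arcs E \<union> Inr ` verts F,
     tdeg = case_sum (\<lambda>e. (1,0)) (\<lambda>w. (0,1)),
     trng = case_sum (head E) qv,
     tsrc = case_sum (tail E) pv,
     tsq = {(Inr (head F f), Inl (pe f), Inl (qe f), Inr (tail F f)) | f. f \<in> arcs F} \<rparr>"

text \<open>Pairing condition: for each lambda of degree e1+e2, lambda(0,e1) and lambda(0,e2)
  lie in the same set of the partition.\<close>
definition pairing_condition ::
  "('a,'b) two_graph \<Rightarrow> ('a \<Rightarrow> nat) \<Rightarrow> ('a \<Rightarrow> nat \<Rightarrow> 'b set) \<Rightarrow> bool" where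
  "pairing_condition L m G \<longleftrightarrow>
     (\<forall>(a,b,c,d) \<in> tsq L. \<exists>z\<in>tverts L. \<exists>j\<in>{1..m z}. a \<in> G z j \<and> c \<in> G z j)"

definition insplit2 ::
  "('a,'b) two_graph \<Rightarrow> ('a \<Rightarrow> nat) \<Rightarrow> ('a \<Rightarrow> nat \<Rightarrow> 'b set) \<Rightarrow> ('a \<times> nat, 'b \<times> nat) two_graph" where
  "insplit2 L m G = \<lparr>
     tverts = {(z,i). z \<in> tverts L \<and> i \<in> {1..m z}},
     tedges = {(f,i). f \<in> tedges L \<and> i \<in> {1..m (tsrc L f)}},
     tdeg = (\<lambda>(f,i). tdeg L f),
     trng = (\<lambda>(f,i). (trng L f, part_index m G (trng L f) f)),
     tsrc = (\<lambda>(f,i). (tsrc L f, i)),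
     tsq = {((f,i),(g,k),(a,j),(b,k)) | f g a b i j k.
              (f,g,a,b) \<in> tsq L \<and> i \<in> {1..m (tsrc L f)} \<and> j \<in> {1..m (tsrc L a)}
              \<and> k \<in> {1..m (tsrc L g)} \<and> g \<in> G (tsrc L f) i \<and> b \<in> G (tsrc L a) j} \<rparr>"

definition two_graph_coincide ::
  "('a,'b) two_graph \<Rightarrow> ('a,'c) two_graph \<Rightarrow> ('b \<Rightarrow> 'c) \<Rightarrow> bool" where
  "two_graph_coincide A B phi \<longleftrightarrow>
     tverts A = tverts B \<and> bij_betw phi (tedges A) (tedges B) \<and>
     (\<forall>x\<in>tedges A. tdeg B (phi x) = tdeg A x \<and> trng B (phi x) = trng A x
                    \<and> tsrc B (phi x) = tsrc A x) \<and>
     (\<lambda>(a,b,c,d). (phi a, phi b, phi c, phi d)) ` tsq A = tsq B"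

definition edge_ident :: "('d \<times> nat) + ('v \<times> nat) \<Rightarrow> ('d + 'v) \<times> nat" where
  "edge_ident = case_sum (\<lambda>(e,i). (Inl e, i)) (\<lambda>(v,i). (Inr v, i))"

end

theory Submission
  imports Defs
begin

text \<open>Everything is governed by two index functions: an edge e of E lies in the block
  E_block e of the partition at its range, and q maps all edges with range u into the single
  block q_block u.  The pulled-back block of an edge f of F is E_block (p f), so p~ respects
  ranges, and unique r-lifting for p~ is unique r-lifting for p with the source index carried
  along.  Dually q~ records q_block on vertices; it respects ranges because q f lies in block
  q_block (r f), and unique s-lifting transfers because an edge of F~ carries the index of its
  source.  In Lambda the block of the colour-1 edge e is E_block e and that of the colour-2
  edge u is q_block u.  This gives the pairing condition, and it shows that a commuting square
  of the insplit 2-graph is determined by an edge f of F and a source index k, exactly like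
  the square of Lambda_T~ coming from the edge (f,k) of F~.\<close>

lemma indexed_partition_subset:
  "indexed_partition A m P \<Longrightarrow> i \<in> {1..m} \<Longrightarrow> P i \<subseteq> A"
  unfolding indexed_partition_def by blast

lemma indexed_partition_unique:
  "indexed_partition A m P \<Longrightarrow> i \<in> {1..m} \<Longrightarrow> j \<in> {1..m} \<Longrightarrow> x \<in> P i \<Longrightarrow> x \<in> P j \<Longrightarrow> i = j"
  unfolding indexed_partition_def by blast

lemma indexed_partition_cover:
  assumes "indexed_partition A m P" and "x \<in> A"
  obtains i where "i \<in> {1..m}" and "x \<in> P i"
  using assms unfolding indexed_partition_def by blast

lemma part_index_eqI:
  assumes "indexed_partition A (m z) (P z)" and "k \<in> {1..m z}" and "x \<in> P z k"
  shows "part_index m P z x = k"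
  unfolding part_index_def
  using assms indexed_partition_unique[OF assms(1)] by (intro the_equality) auto

lemma part_index_mem:
  assumes "indexed_partition A (m z) (P z)" and "x \<in> A"
  shows "part_index m P z x \<in> {1..m z}" and "x \<in> P z (part_index m P z x)"
proof -
  obtain k where "k \<in> {1..m z}" "x \<in> P z k"
    using indexed_partition_cover[OF assms] .
  then show "part_index m P z x \<in> {1..m z}" and "x \<in> P z (part_index m P z x)"
    using part_index_eqI[of A m z P, OF assms(1)] by simp_all
qed

lemma indexed_partition_vimage:
  assumes part: "indexed_partition A m P" and image: "g ` B = A"
  shows "indexed_partition B m (\<lambda>i. {x \<in> B. g x \<in> P i})"
  unfolding indexed_partition_def
proof (intro conjI ballI impI)
  fix i assume i: "i \<in> {1..m}"
  then obtain y where y: "y \<in> P i"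
    using part unfolding indexed_partition_def by blast
  then have "y \<in> g ` B"
    using indexed_partition_subset[OF part i] image by blast
  then show "{x \<in> B. g x \<in> P i} \<noteq> {}"
    using y by blast
next
  fix i j assume "i \<in> {1..m}" "j \<in> {1..m}" "i \<noteq> j"
  then show "{x \<in> B. g x \<in> P i} \<inter> {x \<in> B. g x \<in> P j} = {}"
    using indexed_partition_unique[OF part] by blast
next
  show "(\<Union>i\<in>{1..m}. {x \<in> B. g x \<in> P i}) = B"
    using image indexed_partition_cover[OF part] by blast
qed

lemma indexed_partition_cong:
  "(\<And>i. i \<in> {1..m} \<Longrightarrow> P i = Q i) \<Longrightarrow> indexed_partition A m P \<longleftrightarrow> indexed_partition A m Q"
  unfolding indexed_partition_def by simp

lemma indexed_partition_Plus:
  assumes "indexed_partition A m P"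
    and "\<forall>i\<in>{1..m}. \<forall>j\<in>{1..m}. i \<noteq> j \<longrightarrow> Q i \<inter> Q j = {}" and "(\<Union>i\<in>{1..m}. Q i) = B"
  shows "indexed_partition (Inl ` A \<union> Inr ` B) m (\<lambda>i. Inl ` P i \<union> Inr ` Q i)"
  using assms unfolding indexed_partition_def by blast

lemma graph_homD:
  assumes "graph_hom G H phv phe"
  shows "v \<in> verts G \<Longrightarrow> phv v \<in> verts H"
    and "e \<in> arcs G \<Longrightarrow> phe e \<in> arcs H"
    and "e \<in> arcs G \<Longrightarrow> head H (phe e) = phv (head G e)"
    and "e \<in> arcs G \<Longrightarrow> tail H (phe e) = phv (tail G e)"
  using assms unfolding graph_hom_def by blast+

lemma inj_edge_ident: "inj edge_ident"
  unfolding inj_def edge_ident_def by (auto split: sum.splits)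

locale textile_insplitting =
  F: wf_digraph F + E: wf_digraph E
  for F :: "('v,'e) pre_digraph" and E :: "('w,'d) pre_digraph"
    and pv qv :: "'v \<Rightarrow> 'w" and pe qe :: "'e \<Rightarrow> 'd"
    and m :: "'w \<Rightarrow> nat" and EP :: "'w \<Rightarrow> nat \<Rightarrow> 'd set" +
  assumes LR: "LR_textile F E pv pe qv qe"
    and source_free: "source_free F"
    and EP_partition: "z \<in> verts E \<Longrightarrow> indexed_partition (in_arcs E z) (m z) (EP z)"
    and q_in_arcs_block: "u \<in> verts F \<Longrightarrow> \<exists>z\<in>verts E. \<exists>j\<in>{1..m z}. qe ` in_arcs F u \<subseteq> EP z j"
begin

lemma p_hom: "graph_hom F E pv pe"
  and q_hom: "graph_hom F E qv qe"
  and textile_inj: "inj_on (\<lambda>f. (head F f, pe f, tail F f, qe f)) (arcs F)"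
  using LR by (simp_all add: LR_textile_def textile_system_def)

lemma p_lift:
  "v \<in> verts F \<Longrightarrow> e \<in> arcs E \<Longrightarrow> pv v = head E e \<Longrightarrow> \<exists>!f. f \<in> arcs F \<and> head F f = v \<and> pe f = e"
  using LR unfolding LR_textile_def by simp

lemma q_lift:
  "v \<in> verts F \<Longrightarrow> e \<in> arcs E \<Longrightarrow> qv v = tail E e \<Longrightarrow> \<exists>!f. f \<in> arcs F \<and> tail F f = v \<and> qe f = e"
  using LR unfolding LR_textile_def by simp

lemmas pv_in_verts[simp] = graph_homD(1)[OF p_hom]
  and pe_in_arcs[simp] = graph_homD(2)[OF p_hom]
  and head_pe[simp] = graph_homD(3)[OF p_hom]
  and tail_pe[simp] = graph_homD(4)[OF p_hom]
  and qv_in_verts[simp] = graph_homD(1)[OF q_hom]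
  and qe_in_arcs[simp] = graph_homD(2)[OF q_hom]
  and head_qe[simp] = graph_homD(3)[OF q_hom]
  and tail_qe[simp] = graph_homD(4)[OF q_hom]

lemma in_arc_exists:
  assumes "v \<in> verts F"
  obtains f where "f \<in> arcs F" and "head F f = v"
  using source_free assms unfolding source_free_def by (metis imageE)

lemma EP_in_arcs:
  "z \<in> verts E \<Longrightarrow> i \<in> {1..m z} \<Longrightarrow> e \<in> EP z i \<Longrightarrow> e \<in> arcs E \<and> head E e = z"
  using indexed_partition_subset[OF EP_partition] by fastforce

definition E_block :: "'d \<Rightarrow> nat" where
  "E_block e = part_index m EP (head E e) e"

lemma E_block_mem:
  assumes "e \<in> arcs E"
  shows "E_block e \<in> {1..m (head E e)}" and "e \<in> EP (head E e) (E_block e)"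
  using part_index_mem[of _ m "head E e" EP, OF EP_partition] assms unfolding E_block_def by simp_all

lemma E_block_eqI:
  assumes "z \<in> verts E" and "i \<in> {1..m z}" and "e \<in> EP z i"
  shows "E_block e = i"
  using part_index_eqI[of _ m z EP, OF EP_partition[OF assms(1)] assms(2,3)] EP_in_arcs[OF assms]
  unfolding E_block_def by simp

definition q_block :: "'v \<Rightarrow> nat" where
  "q_block v = (THE j. j \<in> {1..m (qv v)} \<and> qe ` in_arcs F v \<subseteq> EP (qv v) j)"

lemma q_block_mem:
  assumes "v \<in> verts F"
  shows "q_block v \<in> {1..m (qv v)}" and "qe ` in_arcs F v \<subseteq> EP (qv v) (q_block v)"
proof -
  obtain z j where z: "z \<in> verts E" and j: "j \<in> {1..m z}" and block: "qe ` in_arcs F v \<subseteq> EP z j"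
    using q_in_arcs_block assms by blast
  obtain f where f: "f \<in> arcs F" "head F f = v"
    using in_arc_exists assms .
  then have qef: "qe f \<in> EP z j"
    using block by auto
  then have "z = qv v"
    using EP_in_arcs[OF z j qef] f by simp
  have "q_block v = j"
    unfolding q_block_def
  proof (rule the_equality)
    show "j \<in> {1..m (qv v)} \<and> qe ` in_arcs F v \<subseteq> EP (qv v) j"
      using j block \<open>z = qv v\<close> by simp
  next
    fix k assume k: "k \<in> {1..m (qv v)} \<and> qe ` in_arcs F v \<subseteq> EP (qv v) k"
    then have "qe f \<in> EP z k"
      using f \<open>z = qv v\<close> by auto
    then show "k = j"
      using indexed_partition_unique[OF EP_partition[OF z]] j qef k \<open>z = qv v\<close> by blast
  qed
  then show "q_block v \<in> {1..m (qv v)}" and "qe ` in_arcs F v \<subseteq> EP (qv v) (q_block v)"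
    using j block \<open>z = qv v\<close> by simp_all
qed

lemma qe_in_q_block: "f \<in> arcs F \<Longrightarrow> qe f \<in> EP (qv (head F f)) (q_block (head F f))"
  using q_block_mem(2)[of "head F f"] by auto

lemma E_block_qe: "f \<in> arcs F \<Longrightarrow> E_block (qe f) = q_block (head F f)"
  using E_block_eqI[OF _ q_block_mem(1) qe_in_q_block] by simp

definition F_part :: "'v \<Rightarrow> nat \<Rightarrow> 'e set" where
  "F_part v i = {f \<in> in_arcs F v. pe f \<in> EP (pv v) i}"

lemma pe_in_arcs_image:
  assumes "v \<in> verts F"
  shows "pe ` in_arcs F v = in_arcs E (pv v)"
proof
  show "in_arcs E (pv v) \<subseteq> pe ` in_arcs F v"
    using p_lift[OF assms] by (fastforce simp: image_iff)
qed auto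

lemma F_part_partition:
  "v \<in> verts F \<Longrightarrow> indexed_partition (in_arcs F v) (m (pv v)) (F_part v)"
  unfolding F_part_def[abs_def]
  by (rule indexed_partition_vimage[OF EP_partition pe_in_arcs_image]) simp_all

definition split_F :: "('v \<times> nat, 'e \<times> nat) pre_digraph" where
  "split_F = insplit F (\<lambda>v. m (pv v)) F_part"

definition split_E :: "('w \<times> nat, 'd \<times> nat) pre_digraph" where
  "split_E = insplit E m EP"

definition split_pv :: "'v \<times> nat \<Rightarrow> 'w \<times> nat" where
  "split_pv = (\<lambda>(v,i). (pv v, i))"

definition split_pe :: "'e \<times> nat \<Rightarrow> 'd \<times> nat" where
  "split_pe = (\<lambda>(f,i). (pe f, i))"

definition split_qv :: "'v \<times> nat \<Rightarrow> 'w \<times> nat" where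
  "split_qv = (\<lambda>(v,i). (qv v, q_block v))"

definition split_qe :: "'e \<times> nat \<Rightarrow> 'd \<times> nat" where
  "split_qe = (\<lambda>(f,i). (qe f, q_block (tail F f)))"

lemma head_split_F_index:
  assumes "f \<in> arcs F"
  shows "part_index (\<lambda>v. m (pv v)) F_part (head F f) f = E_block (pe f)"
proof (rule part_index_eqI[of _ "\<lambda>v. m (pv v)" "head F f" F_part])
  show "indexed_partition (in_arcs F (head F f)) (m (pv (head F f))) (F_part (head F f))"
    using assms by (simp add: F_part_partition)
  show "E_block (pe f) \<in> {1..m (pv (head F f))}" and "f \<in> F_part (head F f) (E_block (pe f))"
    using E_block_mem[of "pe f"] assms by (simp_all add: F_part_def)
qed

lemma split_F_simps:
  "verts split_F = {(v,i). v \<in> verts F \<and> i \<in> {1..m (pv v)}}"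
  "arcs split_F = {(f,j). f \<in> arcs F \<and> j \<in> {1..m (pv (tail F f))}}"
  "tail split_F (f,j) = (tail F f, j)"
  "f \<in> arcs F \<Longrightarrow> head split_F (f,j) = (head F f, E_block (pe f))"
  by (simp_all add: split_F_def insplit_def head_split_F_index)

lemma split_E_simps:
  "verts split_E = {(z,i). z \<in> verts E \<and> i \<in> {1..m z}}"
  "arcs split_E = {(e,j). e \<in> arcs E \<and> j \<in> {1..m (tail E e)}}"
  "tail split_E (e,j) = (tail E e, j)"
  "head split_E (e,j) = (head E e, E_block e)"
  by (simp_all add: split_E_def insplit_def E_block_def)

lemma split_p_hom: "graph_hom split_F split_E split_pv split_pe"
  unfolding graph_hom_def
  by (auto simp: split_F_simps split_E_simps split_pv_def split_pe_def)

lemma split_q_hom: "graph_hom split_F split_E split_qv split_qe"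
  unfolding graph_hom_def using q_block_mem(1)
  by (auto simp: split_F_simps split_E_simps split_qv_def split_qe_def E_block_qe)

lemma split_textile_inj:
  "inj_on (\<lambda>x. (head split_F x, split_pe x, tail split_F x, split_qe x)) (arcs split_F)"
proof (rule inj_onI, clarsimp simp: split_F_simps split_pe_def split_qe_def)
  fix f g j
  assume "f \<in> arcs F" "g \<in> arcs F" "head F f = head F g" "pe f = pe g" "tail F f = tail F g" "qe f = qe g"
  then show "f = g"
    using inj_onD[OF textile_inj] by simp
qed

lemma split_p_lift:
  assumes "x \<in> verts split_F" and "y \<in> arcs split_E" and "split_pv x = head split_E y"
  shows "\<exists>!a. a \<in> arcs split_F \<and> head split_F a = x \<and> split_pe a = y"
proof -
  obtain v i e j where x: "x = (v,i)" "v \<in> verts F"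
    and y: "y = (e,j)" "e \<in> arcs E" "j \<in> {1..m (tail E e)}"
    using assms(1,2) by (auto simp: split_F_simps split_E_simps)
  have "pv v = head E e" and i: "i = E_block e"
    using assms(3) x y by (simp_all add: split_pv_def split_E_simps)
  then obtain f where f: "f \<in> arcs F" "head F f = v" "pe f = e"
    and unique: "\<And>g. g \<in> arcs F \<Longrightarrow> head F g = v \<Longrightarrow> pe g = e \<Longrightarrow> g = f"
    using p_lift[OF x(2) y(2)] by metis
  show ?thesis
  proof (rule ex1I[of _ "(f,j)"])
    show "(f,j) \<in> arcs split_F \<and> head split_F (f,j) = x \<and> split_pe (f,j) = y"
      using f x y i by (auto simp: split_F_simps split_pe_def)
  qed (use unique x y in \<open>auto simp: split_F_simps split_pe_def\<close>)
qed

lemma split_q_lift: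
  assumes "x \<in> verts split_F" and "y \<in> arcs split_E" and "split_qv x = tail split_E y"
  shows "\<exists>!a. a \<in> arcs split_F \<and> tail split_F a = x \<and> split_qe a = y"
proof -
  obtain v i e j where x: "x = (v,i)" "v \<in> verts F" "i \<in> {1..m (pv v)}"
    and y: "y = (e,j)" "e \<in> arcs E"
    using assms(1,2) by (auto simp: split_F_simps split_E_simps)
  have "qv v = tail E e" and j: "j = q_block v"
    using assms(3) x y by (simp_all add: split_qv_def split_E_simps)
  then obtain f where f: "f \<in> arcs F" "tail F f = v" "qe f = e"
    and unique: "\<And>g. g \<in> arcs F \<Longrightarrow> tail F g = v \<Longrightarrow> qe g = e \<Longrightarrow> g = f"
    using q_lift[OF x(2) y(2)] by metis
  show ?thesis
  proof (rule ex1I[of _ "(f,i)"])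
    show "(f,i) \<in> arcs split_F \<and> tail split_F (f,i) = x \<and> split_qe (f,i) = y"
      using f x y j by (auto simp: split_F_simps split_qe_def)
  qed (use unique x y in \<open>auto simp: split_F_simps split_qe_def\<close>)
qed

lemma split_LR_textile: "LR_textile split_F split_E split_pv split_pe split_qv split_qe"
  unfolding LR_textile_def textile_system_def
  using split_p_hom split_q_hom split_textile_inj split_p_lift split_q_lift by blast

abbreviation \<Lambda> :: "('w, 'd + 'v) two_graph" where
  "\<Lambda> \<equiv> Lambda_T F E pv pe qv qe"

definition G_part :: "'w \<Rightarrow> nat \<Rightarrow> ('d + 'v) set" where
  "G_part z i = Inl ` EP z i \<union> Inr ` (head F ` {f \<in> arcs F. qe f \<in> EP z i})"

lemma Inl_in_G_part_iff[simp]: "Inl e \<in> G_part z i \<longleftrightarrow> e \<in> EP z i"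
  by (auto simp: G_part_def)

lemma Inr_in_G_part_iff:
  assumes "z \<in> verts E" and "i \<in> {1..m z}"
  shows "Inr v \<in> G_part z i \<longleftrightarrow> v \<in> verts F \<and> qv v = z \<and> q_block v = i"
proof
  assume "Inr v \<in> G_part z i"
  then obtain f where f: "f \<in> arcs F" "head F f = v" "qe f \<in> EP z i"
    by (auto simp: G_part_def)
  moreover have "qv v = z"
    using EP_in_arcs[OF assms f(3)] f by simp
  moreover have "q_block v = i"
    using E_block_eqI[OF assms f(3)] E_block_qe[OF f(1)] f(2) by simp
  ultimately show "v \<in> verts F \<and> qv v = z \<and> q_block v = i"
    by auto
next
  assume v: "v \<in> verts F \<and> qv v = z \<and> q_block v = i"
  then obtain f where "f \<in> arcs F" "head F f = v"
    using in_arc_exists by blast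
  then show "Inr v \<in> G_part z i"
    using qe_in_q_block v unfolding G_part_def by force
qed

lemma G_part_eq:
  assumes "z \<in> verts E" and "i \<in> {1..m z}"
  shows "G_part z i = Inl ` EP z i \<union> Inr ` {v \<in> verts F. qv v = z \<and> q_block v = i}"
proof (rule set_eqI)
  fix x
  show "x \<in> G_part z i \<longleftrightarrow> x \<in> Inl ` EP z i \<union> Inr ` {v \<in> verts F. qv v = z \<and> q_block v = i}"
    using Inr_in_G_part_iff[OF assms] by (cases x) auto
qed

lemma G_part_partition:
  assumes z: "z \<in> verts E"
  shows "indexed_partition {x \<in> tedges \<Lambda>. trng \<Lambda> x = z} (m z) (G_part z)"
proof -
  have "{x \<in> tedges \<Lambda>. trng \<Lambda> x = z} = Inl ` in_arcs E z \<union> Inr ` {v \<in> verts F. qv v = z}"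
    by (auto simp: Lambda_T_def)
  moreover have "indexed_partition (Inl ` in_arcs E z \<union> Inr ` {v \<in> verts F. qv v = z}) (m z)
      (\<lambda>i. Inl ` EP z i \<union> Inr ` {v \<in> verts F. qv v = z \<and> q_block v = i})"
    by (rule indexed_partition_Plus[OF EP_partition[OF z]]) (use q_block_mem(1) in auto)
  ultimately show ?thesis
    using indexed_partition_cong[of "m z" "G_part z"] G_part_eq[OF z] by simp
qed

lemma G_part_pairing: "pairing_condition \<Lambda> m G_part"
proof -
  have "\<exists>z\<in>verts E. \<exists>j\<in>{1..m z}. Inr (head F f) \<in> G_part z j \<and> Inl (qe f) \<in> G_part z j"
    if f: "f \<in> arcs F" for f
  proof (intro bexI conjI)
    show "Inr (head F f) \<in> G_part (qv (head F f)) (q_block (head F f))"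
      using Inr_in_G_part_iff[OF _ q_block_mem(1)] f by simp
    show "Inl (qe f) \<in> G_part (qv (head F f)) (q_block (head F f))"
      using qe_in_q_block f by simp
  qed (use f q_block_mem(1) in auto)
  then show ?thesis
    unfolding pairing_condition_def by (auto simp: Lambda_T_def)
qed

lemma G_part_index_Inl: "e \<in> arcs E \<Longrightarrow> part_index m G_part (head E e) (Inl e) = E_block e"
  by (rule part_index_eqI[of _ m "head E e" G_part, OF G_part_partition]) (use E_block_mem in auto)

lemma G_part_index_Inr: "v \<in> verts F \<Longrightarrow> part_index m G_part (qv v) (Inr v) = q_block v"
  by (rule part_index_eqI[of _ m "qv v" G_part, OF G_part_partition])
    (use q_block_mem(1) Inr_in_G_part_iff[OF _ q_block_mem(1)] in auto)

abbreviation \<Lambda>_split :: "('w \<times> nat, ('d \<times> nat) + ('v \<times> nat)) two_graph" where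
  "\<Lambda>_split \<equiv> Lambda_T split_F split_E split_pv split_pe split_qv split_qe"

abbreviation \<Lambda>_insplit :: "('w \<times> nat, ('d + 'v) \<times> nat) two_graph" where
  "\<Lambda>_insplit \<equiv> insplit2 \<Lambda> m G_part"

lemma edge_ident_image: "edge_ident ` tedges \<Lambda>_split = tedges \<Lambda>_insplit"
proof (intro equalityI subsetI)
  fix y assume "y \<in> tedges \<Lambda>_insplit"
  then obtain x i where y: "y = (x,i)" "x \<in> tedges \<Lambda>" "i \<in> {1..m (tsrc \<Lambda> x)}"
    by (auto simp: insplit2_def)
  then show "y \<in> edge_ident ` tedges \<Lambda>_split"
    by (cases x) (force simp: Lambda_T_def split_E_simps split_F_simps edge_ident_def)+
qed (auto simp: Lambda_T_def insplit2_def split_E_simps split_F_simps edge_ident_def)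

lemma edge_ident_skeleton:
  assumes "x \<in> tedges \<Lambda>_split"
  shows "tdeg \<Lambda>_insplit (edge_ident x) = tdeg \<Lambda>_split x"
    and "trng \<Lambda>_insplit (edge_ident x) = trng \<Lambda>_split x"
    and "tsrc \<Lambda>_insplit (edge_ident x) = tsrc \<Lambda>_split x"
  using assms G_part_index_Inl G_part_index_Inr
  by (auto simp: Lambda_T_def insplit2_def split_E_simps split_F_simps edge_ident_def
      split_pv_def split_qv_def)

lemma tsq_\<Lambda>_insplit:
  "tsq \<Lambda>_insplit = (\<lambda>(h,k). ((Inr (head F h), E_block (pe h)), (Inl (pe h), k),
       (Inl (qe h), q_block (tail F h)), (Inr (tail F h), k))) ` arcs split_F"
  (is "_ = ?square ` _")
proof (intro equalityI subsetI)
  fix y assume "y \<in> tsq \<Lambda>_insplit"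
  then obtain h i j k
    where y: "y = ((Inr (head F h), i), (Inl (pe h), k), (Inl (qe h), j), (Inr (tail F h), k))"
      and h: "h \<in> arcs F" and k: "k \<in> {1..m (pv (tail F h))}"
      and i: "i \<in> {1..m (pv (head F h))}" "pe h \<in> EP (pv (head F h)) i"
      and j: "j \<in> {1..m (qv (tail F h))}" "Inr (tail F h) \<in> G_part (qv (tail F h)) j"
    by (auto simp: insplit2_def Lambda_T_def)
  have "i = E_block (pe h)"
    using E_block_eqI[OF _ i] h by simp
  moreover have "j = q_block (tail F h)"
    using Inr_in_G_part_iff[OF _ j(1)] j(2) h by simp
  ultimately have "y = ?square (h,k)"
    using y by simp
  moreover have "(h,k) \<in> arcs split_F"
    using h k by (simp add: split_F_simps)
  ultimately show "y \<in> ?square ` arcs split_F"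
    by blast
next
  fix y assume "y \<in> ?square ` arcs split_F"
  then obtain h k where y: "y = ?square (h,k)" and h: "h \<in> arcs F" and k: "k \<in> {1..m (pv (tail F h))}"
    by (auto simp: split_F_simps)
  have "Inr (tail F h) \<in> G_part (qv (tail F h)) (q_block (tail F h))"
    using Inr_in_G_part_iff[OF _ q_block_mem(1)] h by simp
  then show "y \<in> tsq \<Lambda>_insplit"
    using y h k E_block_mem[of "pe h"] q_block_mem(1)[of "tail F h"]
    by (auto simp: insplit2_def Lambda_T_def)
qed

lemma edge_ident_squares:
  "(\<lambda>(a,b,c,d). (edge_ident a, edge_ident b, edge_ident c, edge_ident d)) ` tsq \<Lambda>_split
     = tsq \<Lambda>_insplit"
proof -
  have squares: "tsq \<Lambda>_split = (\<lambda>x. (Inr (head split_F x), Inl (split_pe x), Inl (split_qe x), Inr (tail split_F x)))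
      ` arcs split_F"
    by (auto simp: Lambda_T_def)
  show ?thesis
    unfolding squares tsq_\<Lambda>_insplit image_image
    by (intro image_cong) (auto simp: split_F_simps split_pe_def split_qe_def edge_ident_def)
qed

lemma \<Lambda>_split_coincide: "two_graph_coincide \<Lambda>_split \<Lambda>_insplit edge_ident"
  unfolding two_graph_coincide_def bij_betw_def
  using inj_on_subset[OF inj_edge_ident] edge_ident_image edge_ident_skeleton edge_ident_squares
  by (simp add: Lambda_T_def insplit2_def split_E_simps)

end

theorem theorem7p11:
  fixes F :: "('v,'e) pre_digraph" and E :: "('w,'d) pre_digraph"
    and pv qv :: "'v \<Rightarrow> 'w" and pe qe :: "'e \<Rightarrow> 'd"
    and m :: "'w \<Rightarrow> nat" and EP :: "'w \<Rightarrow> nat \<Rightarrow> 'd set"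
  assumes wfF: "wf_digraph F" and wfE: "wf_digraph E"
    and LR: "LR_textile F E pv pe qv qe"
    and p_surj: "pv ` verts F = verts E" "pe ` arcs F = arcs E"
    and srcfree: "source_free F"
    and EPpart: "\<forall>z\<in>verts E. indexed_partition (in_arcs E z) (m z) (EP z)"
    and qcond: "\<forall>u\<in>verts F. \<exists>z\<in>verts E. \<exists>j\<in>{1..m z}. qe ` in_arcs F u \<subseteq> EP z j"
  defines "FP \<equiv> \<lambda>v i. {f \<in> in_arcs F v. pe f \<in> EP (pv v) i}"
    and "GP \<equiv> \<lambda>z i. Inl ` EP z i \<union> Inr ` (head F ` {f \<in> arcs F. qe f \<in> EP z i})"
    and "Ft \<equiv> insplit F (\<lambda>v. m (pv v)) (\<lambda>v i. {f \<in> in_arcs F v. pe f \<in> EP (pv v) i})"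
    and "Et \<equiv> insplit E m EP"
    and "ptv \<equiv> \<lambda>(v,i). (pv v, i)" and "pte \<equiv> \<lambda>(f,i). (pe f, i)"
    and "qtv \<equiv> \<lambda>(v,i). (qv v, (THE j. j \<in> {1..m (qv v)} \<and> qe ` in_arcs F v \<subseteq> EP (qv v) j))" and "qte \<equiv> \<lambda>(f,i). (qe f, (\<lambda>v. (THE j. j \<in> {1..m (qv v)} \<and> qe ` in_arcs F v \<subseteq> EP (qv v) j)) (tail F f))"
    and "\<Lambda> \<equiv> Lambda_T F E pv pe qv qe"
  shows "((\<forall>v\<in>verts F. indexed_partition (in_arcs F v) (m (pv v)) (FP v))
         \<and> graph_hom Ft Et ptv pte \<and> graph_hom Ft Et qtv qte
         \<and> LR_textile Ft Et ptv pte qtv qte)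
         \<and> ((\<forall>z\<in>verts E. indexed_partition {x \<in> tedges \<Lambda>. trng \<Lambda> x = z} (m z) (GP z))
         \<and> pairing_condition \<Lambda> m GP)
         \<and> two_graph_coincide (Lambda_T Ft Et ptv pte qtv qte) (insplit2 \<Lambda> m GP) edge_ident"
proof -
  interpret T: textile_insplitting F E pv qv pe qe m EP
    using wfF wfE LR srcfree EPpart qcond
    by (simp add: textile_insplitting_def textile_insplitting_axioms_def)
  have "FP = T.F_part" "GP = T.G_part" "Ft = T.split_F" "Et = T.split_E"
    and "ptv = T.split_pv" "pte = T.split_pe" "qtv = T.split_qv" "qte = T.split_qe"
    unfolding FP_def GP_def Ft_def Et_def ptv_def pte_def qtv_def qte_def
      T.F_part_def[abs_def] T.G_part_def[abs_def] T.split_F_def T.split_E_def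
      T.split_pv_def T.split_pe_def T.split_qv_def T.split_qe_def T.q_block_def
    by simp_all
  then show ?thesis
    unfolding \<Lambda>_def
    using T.F_part_partition T.split_p_hom T.split_q_hom T.split_LR_textile
      T.G_part_partition T.G_part_pairing T.\<Lambda>_split_coincide
    by simp
qed

end
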